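(* Let $n\ge0$ and $\kappa\ge0$, and suppose the arc travel times are $t_a(v_a)=b_a(v_a)^n$ with $b_a>0$ for each $a\in\mathcal A$. Let $\bar{\mathbf v}\in\mathbf V$ satisfy $$\sum_{a\in\mathcal A}\lambda_at_a(\bar v_a)(v_a-\bar v_a)\ge0\qquad\text{for all }\mathbf v\in\mathbf V$$ for some constants $\lambda_a\in[\tfrac1{1+\kappa},1]$, and let $\bar{\mathbf f}\in\mathbf F$ be any path flow inducing $\bar{\mathbf v}$. Let $\hat{\mathbf f}^0\in\mathbf F_{1+\kappa}$ be a PRUE flow for the demands $(1+\kappa)Q_w$ and $\mathbf f^0\in\mathbf F$ a PRUE flow for the demands $Q_w$. Then $C(\bar{\mathbf f})\le C(\hat{\mathbf f}^0)$, and consequently $C(\bar{\mathbf f})\le(1+\kappa)^{n+1}C(\mathbf f^0)$.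
   Context: Let $G=(\mathcal N,\mathcal A)$ be a finite directed graph and $\mathcal W$ a finite set of OD pairs; each $w$ has demand $Q_w>0$ and a finite set $\mathcal P_w$ of paths from its origin to its destination; $\mathcal P=\bigcup_w\mathcal P_w$; $\delta^p_a=1$ if arc $a$ lies on path $p$, else $0$. $\mathbf F=\{\mathbf f\ge0:\sum_{p\in\mathcal P_w}f_p=Q_w\ \forall w\}$ and $\mathbf F_{1+\kappa}=\{(1+\kappa)\mathbf f:\mathbf f\in\mathbf F\}$ (the feasible flows when every demand is multiplied by $1+\kappa$). A path flow induces arc flows $v_a=\sum_p\delta^p_af_p$; $\mathbf V$ is the set of arc flows induced by $\mathbf F$. Path travel time $c_p(\mathbf f)=\sum_a\delta^p_at_a(v_a)$; total system travel time $C(\mathbf f)=\sum_pc_p(\mathbf f)f_p=\sum_at_a(v_a)v_a$. A feasible flow (in $\mathbf F$ or $\mathbf F_{1+\kappa}$) is a PRUE if for all $w$ and $p\in\mathcal P_w$, $f_p>0\implies c_p(\mathbf f)=\min_{p'\in\mathcal P_w}c_{p'}(\mathbf f)$. *)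

theory Defs
  imports Complex_Main
begin

definition is_path ::
  "('a \<Rightarrow> 'n) \<Rightarrow> ('a \<Rightarrow> 'n) \<Rightarrow> 'a set \<Rightarrow> 'n \<Rightarrow> 'n \<Rightarrow> 'a list \<Rightarrow> bool" where
  "is_path tail head A u d p \<longleftrightarrow>
     p \<noteq> [] \<and> set p \<subseteq> A \<and> tail (p ! 0) = u \<and> head (last p) = d \<and>
     (\<forall>i. Suc i < length p \<longrightarrow> head (p ! i) = tail (p ! Suc i))"

definition delta :: "'a list \<Rightarrow> 'a \<Rightarrow> real" where
  "delta p a = (if a \<in> set p then 1 else 0)"

text \<open>Path flows are indexed by pairs (w,p) with p in P w. Feasible path flows
  when each demand Q w is multiplied by s (s = 1 gives F, s = 1+kappa gives F_{1+kappa}).\<close>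
definition feasible_flows ::
  "'w set \<Rightarrow> ('w \<Rightarrow> real) \<Rightarrow> ('w \<Rightarrow> 'a list set) \<Rightarrow> real \<Rightarrow> ('w \<times> 'a list \<Rightarrow> real) set" where
  "feasible_flows W Q P s =
     {f. (\<forall>w\<in>W. \<forall>p\<in>P w. f (w, p) \<ge> 0) \<and> (\<forall>w\<in>W. (\<Sum>p\<in>P w. f (w, p)) = s * Q w)}"

definition arc_flow ::
  "'w set \<Rightarrow> ('w \<Rightarrow> 'a list set) \<Rightarrow> ('w \<times> 'a list \<Rightarrow> real) \<Rightarrow> 'a \<Rightarrow> real" where
  "arc_flow W P f a = (\<Sum>(w, p)\<in>Sigma W P. delta p a * f (w, p))"

definition arc_flows ::
  "'w set \<Rightarrow> ('w \<Rightarrow> real) \<Rightarrow> ('w \<Rightarrow> 'a list set) \<Rightarrow> ('a \<Rightarrow> real) set" where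
  "arc_flows W Q P = arc_flow W P ` feasible_flows W Q P 1"

text \<open>x^n for real n \<ge> 0 and x \<ge> 0, with the convention x^0 = 1 (also at x = 0).\<close>
definition rpow :: "real \<Rightarrow> real \<Rightarrow> real" where
  "rpow x n = (if n = 0 then 1 else x powr n)"

definition path_cost ::
  "'a set \<Rightarrow> ('a \<Rightarrow> real \<Rightarrow> real) \<Rightarrow> 'w set \<Rightarrow> ('w \<Rightarrow> 'a list set) \<Rightarrow>
   ('w \<times> 'a list \<Rightarrow> real) \<Rightarrow> 'a list \<Rightarrow> real" where
  "path_cost A t W P f p = (\<Sum>a\<in>A. delta p a * t a (arc_flow W P f a))"

definition total_cost ::
  "'a set \<Rightarrow> ('a \<Rightarrow> real \<Rightarrow> real) \<Rightarrow> 'w set \<Rightarrow> ('w \<Rightarrow> 'a list set) \<Rightarrow>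
   ('w \<times> 'a list \<Rightarrow> real) \<Rightarrow> real" where
  "total_cost A t W P f = (\<Sum>a\<in>A. t a (arc_flow W P f a) * arc_flow W P f a)"

definition is_PRUE ::
  "'a set \<Rightarrow> ('a \<Rightarrow> real \<Rightarrow> real) \<Rightarrow> 'w set \<Rightarrow> ('w \<Rightarrow> real) \<Rightarrow> ('w \<Rightarrow> 'a list set) \<Rightarrow>
   real \<Rightarrow> ('w \<times> 'a list \<Rightarrow> real) \<Rightarrow> bool" where
  "is_PRUE A t W Q P s f \<longleftrightarrow> f \<in> feasible_flows W Q P s \<and>
     (\<forall>w\<in>W. \<forall>p\<in>P w. f (w, p) > 0 \<longrightarrow>
        path_cost A t W P f p = (MIN p'\<in>P w. path_cost A t W P f p'))"

end

theory Submission
  imports Defs "HOL-Analysis.Analysis"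
begin

text \<open>By convexity of \<open>z \<mapsto> z powr (n + 1)\<close>, the variational inequality tested against the
  arc flows of any \<open>g \<in> F\<close> shows that the \<open>\<lambda>\<close>-weighted cost of \<open>vbar\<close> is at most that of \<open>g\<close>.
  As \<open>1 / (1 + \<kappa>) \<le> \<lambda>\<^sub>a \<le> 1\<close>, removing the weights loses at most a factor \<open>1 + \<kappa>\<close>, so
  \<open>C(fbar) \<le> (1 + \<kappa>) C(g)\<close> for every \<open>g \<in> F\<close>. The choice \<open>g = fhat0 / (1 + \<kappa>)\<close>, whose cost
  is at most \<open>C(fhat0) / (1 + \<kappa>)\<close> since travel times are nondecreasing, gives the first bound,
  and \<open>g = f0\<close> the second.\<close>

lemma rpow_nonneg: "x \<ge> 0 \<Longrightarrow> rpow x n \<ge> 0"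
  by (simp add: rpow_def)

lemma rpow_mono: "0 \<le> x \<Longrightarrow> x \<le> y \<Longrightarrow> n \<ge> 0 \<Longrightarrow> rpow x n \<le> rpow y n"
  by (simp add: rpow_def powr_mono2)

lemma rpow_times_self: "x \<ge> 0 \<Longrightarrow> n \<ge> 0 \<Longrightarrow> rpow x n * x = x powr (n + 1)"
  by (auto simp: rpow_def powr_add)

lemma rpow_Young_inequality:
  fixes n x y :: real
  assumes "n \<ge> 0" "x \<ge> 0" "y \<ge> 0"
  shows "(n + 1) * (rpow x n * y) \<le> n * (rpow x n * x) + rpow y n * y"
proof (cases "n = 0 \<or> x = 0 \<or> y = 0")
  case True
  then show ?thesis
    using assms rpow_times_self[of y n] by (auto simp: rpow_def)
next
  case False
  then have pos: "n > 0" "x > 0" "y > 0"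
    using assms by auto
  have "(x powr (n + 1)) powr (n / (n + 1)) * (y powr (n + 1)) powr (1 / (n + 1))
      \<le> n / (n + 1) * x powr (n + 1) + 1 / (n + 1) * y powr (n + 1)"
    by (rule Youngs_inequality_0) (use pos in \<open>auto simp: field_simps\<close>)
  then have "x powr n * y \<le> n / (n + 1) * x powr (n + 1) + 1 / (n + 1) * y powr (n + 1)"
    using pos by (simp add: powr_powr)
  then have "(n + 1) * (x powr n * y)
      \<le> (n + 1) * (n / (n + 1) * x powr (n + 1) + 1 / (n + 1) * y powr (n + 1))"
    using pos by (intro mult_left_mono) auto
  also have "\<dots> = n * x powr (n + 1) + y powr (n + 1)"
    using pos by (simp add: distrib_left)
  finally have "(n + 1) * (x powr n * y) \<le> n * x powr (n + 1) + y powr (n + 1)" .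
  then show ?thesis
    using pos rpow_times_self[of x n] rpow_times_self[of y n] by (simp add: rpow_def)
qed

lemma rpow_tangent_le:
  fixes n x y :: real
  assumes "n \<ge> 0" "x \<ge> 0" "y \<ge> 0"
  shows "(n + 1) * rpow x n * (y - x) \<le> rpow y n * y - rpow x n * x"
  using rpow_Young_inequality[OF assms] by (simp add: algebra_simps)

lemma variational_inequality_imp_power_sum_le:
  fixes w x y :: "'a \<Rightarrow> real"
  assumes "n \<ge> 0"
    and "\<forall>a\<in>A. w a \<ge> 0 \<and> x a \<ge> 0 \<and> y a \<ge> 0"
    and "(\<Sum>a\<in>A. w a * rpow (x a) n * (y a - x a)) \<ge> 0"
  shows "(\<Sum>a\<in>A. w a * (rpow (x a) n * x a)) \<le> (\<Sum>a\<in>A. w a * (rpow (y a) n * y a))"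
proof -
  have "0 \<le> (n + 1) * (\<Sum>a\<in>A. w a * rpow (x a) n * (y a - x a))"
    using assms(1,3) by simp
  also have "\<dots> = (\<Sum>a\<in>A. w a * ((n + 1) * rpow (x a) n * (y a - x a)))"
    by (simp add: sum_distrib_left algebra_simps)
  also have "\<dots> \<le> (\<Sum>a\<in>A. w a * (rpow (y a) n * y a - rpow (x a) n * x a))"
    using assms(1,2) by (intro sum_mono mult_left_mono rpow_tangent_le) auto
  also have "\<dots> = (\<Sum>a\<in>A. w a * (rpow (y a) n * y a)) - (\<Sum>a\<in>A. w a * (rpow (x a) n * x a))"
    by (simp add: sum_subtractf[symmetric] algebra_simps)
  finally show ?thesis
    by simp
qed

lemma arc_flow_nonneg:
  "f \<in> feasible_flows W Q P s \<Longrightarrow> arc_flow W P f a \<ge> 0"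
  unfolding arc_flow_def feasible_flows_def
  by (intro sum_nonneg) (auto simp: delta_def)

lemma arc_flow_scale: "arc_flow W P (\<lambda>x. r * f x) a = r * arc_flow W P f a"
  unfolding arc_flow_def by (simp add: sum_distrib_left case_prod_unfold algebra_simps)

lemma feasible_flows_scale:
  "r \<ge> 0 \<Longrightarrow> f \<in> feasible_flows W Q P s \<Longrightarrow> (\<lambda>x. r * f x) \<in> feasible_flows W Q P (r * s)"
  unfolding feasible_flows_def by (simp add: sum_distrib_left[symmetric])

lemma total_cost_nonneg:
  assumes "\<forall>a\<in>A. b a \<ge> 0" "f \<in> feasible_flows W Q P s"
  shows "total_cost A (\<lambda>a x. b a * rpow x n) W P f \<ge> 0"
  unfolding total_cost_def
  using assms arc_flow_nonneg[OF assms(2)] rpow_nonneg by (intro sum_nonneg) auto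

lemma total_cost_scale_le:
  assumes "\<forall>a\<in>A. b a \<ge> 0" "n \<ge> 0" "0 \<le> r" "r \<le> 1" "f \<in> feasible_flows W Q P s"
  shows "total_cost A (\<lambda>a x. b a * rpow x n) W P (\<lambda>x. r * f x)
    \<le> r * total_cost A (\<lambda>a x. b a * rpow x n) W P f"
  unfolding total_cost_def arc_flow_scale sum_distrib_left
proof (rule sum_mono)
  fix a assume "a \<in> A"
  define v where "v = arc_flow W P f a"
  have "v \<ge> 0"
    using arc_flow_nonneg[OF assms(5)] v_def by simp
  moreover have "rpow (r * v) n \<le> rpow v n"
    using \<open>v \<ge> 0\<close> assms(2-4) by (intro rpow_mono) (auto simp: mult_left_le_one_le)
  ultimately show "b a * rpow (r * v) n * (r * v) \<le> r * (b a * rpow v n * v)"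
    using \<open>a \<in> A\<close> assms(1,3) by (simp add: mult_left_mono mult_right_mono mult.left_commute)
qed

lemma weight_scaling_bounds:
  fixes \<kappa> l c :: real
  assumes "\<kappa> \<ge> 0" "1 / (1 + \<kappa>) \<le> l" "l \<le> 1" "c \<ge> 0"
  shows "0 \<le> l" "c \<le> (1 + \<kappa>) * (l * c)" "l * c \<le> c"
proof -
  have "0 < 1 / (1 + \<kappa>)"
    using assms(1) by simp
  then show "0 \<le> l"
    using assms(2) by linarith
  have "1 \<le> (1 + \<kappa>) * l"
    using assms(1,2) by (simp add: divide_le_eq mult.commute)
  then show "c \<le> (1 + \<kappa>) * (l * c)"
    using mult_right_mono[OF _ assms(4)] by fastforce
  show "l * c \<le> c"
    using mult_right_mono[OF assms(3,4)] by simp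
qed

lemma variational_inequality_solution_cost_le:
  fixes n \<kappa> :: real and b lam :: "'a \<Rightarrow> real"
  defines "t \<equiv> \<lambda>a x. b a * rpow x n"
  assumes n: "n \<ge> 0" and \<kappa>: "\<kappa> \<ge> 0" and b: "\<forall>a\<in>A. b a \<ge> 0"
    and lam: "\<forall>a\<in>A. 1 / (1 + \<kappa>) \<le> lam a \<and> lam a \<le> 1"
    and fbar: "fbar \<in> feasible_flows W Q P 1"
    and VI: "\<forall>v\<in>arc_flows W Q P.
      (\<Sum>a\<in>A. lam a * t a (arc_flow W P fbar a) * (v a - arc_flow W P fbar a)) \<ge> 0"
    and g: "g \<in> feasible_flows W Q P 1"
  shows "total_cost A t W P fbar \<le> (1 + \<kappa>) * total_cost A t W P g"
proof -
  define x where "x = arc_flow W P fbar"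
  define y where "y = arc_flow W P g"
  have x_nonneg: "x a \<ge> 0" and y_nonneg: "y a \<ge> 0" for a
    using arc_flow_nonneg[OF fbar] arc_flow_nonneg[OF g] by (simp_all add: x_def y_def)
  have cost_nonneg: "b a * (rpow (z a) n * z a) \<ge> 0" if "a \<in> A" "\<And>a. z a \<ge> 0" for a z
    using b that rpow_nonneg by simp
  have "total_cost A t W P fbar = (\<Sum>a\<in>A. b a * (rpow (x a) n * x a))"
    by (simp add: total_cost_def t_def x_def mult.assoc)
  also have "\<dots> \<le> (\<Sum>a\<in>A. (1 + \<kappa>) * (lam a * (b a * (rpow (x a) n * x a))))"
    using lam \<kappa> cost_nonneg x_nonneg by (intro sum_mono weight_scaling_bounds(2)) auto
  also have "\<dots> = (1 + \<kappa>) * (\<Sum>a\<in>A. lam a * b a * (rpow (x a) n * x a))"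
    by (simp add: sum_distrib_left mult.assoc)
  also have "\<dots> \<le> (1 + \<kappa>) * (\<Sum>a\<in>A. lam a * b a * (rpow (y a) n * y a))"
  proof -
    have "y \<in> arc_flows W Q P"
      using g y_def by (simp add: arc_flows_def)
    then have "(\<Sum>a\<in>A. lam a * b a * rpow (x a) n * (y a - x a)) \<ge> 0"
      using VI by (simp add: t_def x_def mult.assoc)
    moreover have "\<forall>a\<in>A. lam a * b a \<ge> 0"
      using lam b \<kappa> weight_scaling_bounds(1) by (meson mult_nonneg_nonneg)
    ultimately show ?thesis
      using n \<kappa> x_nonneg y_nonneg
      by (intro mult_left_mono variational_inequality_imp_power_sum_le) auto
  qed
  also have "\<dots> \<le> (1 + \<kappa>) * (\<Sum>a\<in>A. b a * (rpow (y a) n * y a))"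
    using lam \<kappa> cost_nonneg y_nonneg
    by (intro mult_left_mono sum_mono) (auto simp: mult.assoc intro: weight_scaling_bounds(3))
  also have "\<dots> = (1 + \<kappa>) * total_cost A t W P g"
    by (simp add: total_cost_def t_def y_def mult.assoc)
  finally show ?thesis .
qed

theorem theorem1:
  fixes N :: "'n set" and A :: "'a set" and tail head :: "'a \<Rightarrow> 'n"
    and W :: "'w set" and orig dest :: "'w \<Rightarrow> 'n" and Q :: "'w \<Rightarrow> real"
    and P :: "'w \<Rightarrow> 'a list set"
    and n \<kappa> :: real and b lam :: "'a \<Rightarrow> real" and t :: "'a \<Rightarrow> real \<Rightarrow> real"
    and vbar :: "'a \<Rightarrow> real" and fbar fhat0 f0 :: "'w \<times> 'a list \<Rightarrow> real"
  assumes "finite N" "finite A" "\<forall>a\<in>A. tail a \<in> N \<and> head a \<in> N"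
    and "finite W" "\<forall>w\<in>W. orig w \<in> N \<and> dest w \<in> N \<and> Q w > 0"
    and "\<forall>w\<in>W. finite (P w) \<and> (\<forall>p\<in>P w. is_path tail head A (orig w) (dest w) p)"
    and "n \<ge> 0" "\<kappa> \<ge> 0"
    and "\<forall>a\<in>A. b a > 0"
    and "\<And>a x. t a x = b a * rpow x n"
    and "\<forall>a\<in>A. 1 / (1 + \<kappa>) \<le> lam a \<and> lam a \<le> 1"
    and "vbar \<in> arc_flows W Q P"
    and "\<forall>v\<in>arc_flows W Q P. (\<Sum>a\<in>A. lam a * t a (vbar a) * (v a - vbar a)) \<ge> 0"
    and "fbar \<in> feasible_flows W Q P 1" "arc_flow W P fbar = vbar"
    and "is_PRUE A t W Q P (1 + \<kappa>) fhat0"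
    and "is_PRUE A t W Q P 1 f0"
  shows "total_cost A t W P fbar \<le> total_cost A t W P fhat0 \<and>
         total_cost A t W P fbar \<le> (1 + \<kappa>) powr (n + 1) * total_cost A t W P f0"
proof -
  have t: "t = (\<lambda>a x. b a * rpow x n)"
    using assms(10) by (intro ext) simp
  have b: "\<forall>a\<in>A. b a \<ge> 0"
    using assms(9) by (simp add: less_imp_le)
  have cost_le: "total_cost A t W P fbar \<le> (1 + \<kappa>) * total_cost A t W P g"
    if "g \<in> feasible_flows W Q P 1" for g
    using variational_inequality_solution_cost_le[OF assms(7,8) b assms(11,14) _ that]
      assms(13,15) t by simp
  have fhat0: "fhat0 \<in> feasible_flows W Q P (1 + \<kappa>)" and f0: "f0 \<in> feasible_flows W Q P 1"
    using assms(16,17) by (simp_all add: is_PRUE_def)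
  let ?g = "\<lambda>x. 1 / (1 + \<kappa>) * fhat0 x"
  have "?g \<in> feasible_flows W Q P 1"
    using feasible_flows_scale[OF _ fhat0, of "1 / (1 + \<kappa>)"] assms(8) by simp
  moreover have "(1 + \<kappa>) * total_cost A t W P ?g \<le> total_cost A t W P fhat0"
    using total_cost_scale_le[OF b assms(7) _ _ fhat0, of "1 / (1 + \<kappa>)"] assms(8) t
    by (simp add: field_simps)
  ultimately have "total_cost A t W P fbar \<le> total_cost A t W P fhat0"
    using cost_le by (meson order_trans)
  moreover have "(1 + \<kappa>) * total_cost A t W P f0 \<le> (1 + \<kappa>) powr (n + 1) * total_cost A t W P f0"
    using total_cost_nonneg[OF b f0] assms(7,8) t
    by (intro mult_right_mono) (auto intro: order_trans[OF _ powr_mono[of 1 "n + 1"]])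
  ultimately show ?thesis
    using cost_le[OF f0] by simp
qed

end
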